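(* Let $G$ be a right modular groupoid and let $x \notin G$. Then $G \cup \{x\}$ can be made into a right modular groupoid that is a generalised inflation of $G$ (with respect to the decomposition $G_a = \{a\}$ for $a \neq c$, $G_c = \{c, x\}$ for some $c\in G$, and maps $\alpha_x,\beta_x$ for the new element $x$) if and only if there exist maps $\alpha_x, \beta_x : G \to G$ and an element $c \in G$ such that for all $a, b \in G$: (1) $(\alpha_x(a)\cdot a)\cdot b = (ba)\cdot \beta_x(ba)$; (2) $(a\cdot \beta_x(a))\cdot b = (b\cdot\beta_x(b))\cdot a$; (3) $(\alpha_x(c)\cdot \beta_x(c))\cdot a = (a\cdot\beta_x(a))\cdot \beta_x(a\cdot \beta_x(a))$.
   Context: A groupoid is a set with a binary operation, written $xy$ or $x\cdot y$. A groupoid $G$ is right modular if $xy\cdot z = zy\cdot x$ for all $x,y,z \in G$. A groupoid $H$ is a generalised inflation of its subgroupoid $U$ if $H = \bigcup_{u\in U} H_u$ where (1) $u \in H_u$ for all $u \in U$, (2) $H_u\cap H_v=\emptyset$ for $u\neq v$, (3) for every $y \in H$ there are maps $\alpha_y, \beta_y : U \to U$ such that for all $y \in H_u$ and $z \in H_v$ ($u,v\in U$) one has $yz = \alpha_y(v)\cdot \beta_z(u)$ (product computed in $U$), and (4) for $u \in U$, $\alpha_u$ and $\beta_u$ are both the constant map on $U$ with value $u$. In particular, with $U=G$, $H = G\cup\{x\}$ and $x \in H_c$, the multiplication involving $x$ is $xa = \alpha_x(a)\cdot a$, $ax = a\cdot\beta_x(a)$ for $a\in G$, and $xx = \alpha_x(c)\cdot\beta_x(c)$,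 while products of elements of $G$ are as in $G$. *)

theory Defs
  imports Main
begin

definition groupoid :: "'a set \<Rightarrow> ('a \<Rightarrow> 'a \<Rightarrow> 'a) \<Rightarrow> bool" where
  "groupoid S m \<longleftrightarrow> (\<forall>a\<in>S. \<forall>b\<in>S. m a b \<in> S)"

definition right_modular :: "'a set \<Rightarrow> ('a \<Rightarrow> 'a \<Rightarrow> 'a) \<Rightarrow> bool" where
  "right_modular S m \<longleftrightarrow> (\<forall>x\<in>S. \<forall>y\<in>S. \<forall>z\<in>S. m (m x y) z = m (m z y) x)"

text \<open>H (with operation m) is a generalised inflation of its subgroupoid U
  via the decomposition P (P u is the block H_u); the operation of U is the
  restriction of m.  The maps alpha_y, beta_y are encoded as alpha y, beta y.\<close>
definition gen_inflation ::
  "'a set \<Rightarrow> ('a \<Rightarrow> 'a \<Rightarrow> 'a) \<Rightarrow> 'a set \<Rightarrow> ('a \<Rightarrow> 'a set) \<Rightarrow> bool" where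
  "gen_inflation H m U P \<longleftrightarrow>
     U \<subseteq> H \<and> groupoid U m \<and>
     H = (\<Union>u\<in>U. P u) \<and>
     (\<forall>u\<in>U. u \<in> P u) \<and>
     (\<forall>u\<in>U. \<forall>v\<in>U. u \<noteq> v \<longrightarrow> P u \<inter> P v = {}) \<and>
     (\<exists>\<alpha> \<beta> :: 'a \<Rightarrow> 'a \<Rightarrow> 'a.
        (\<forall>y\<in>H. \<forall>v\<in>U. \<alpha> y v \<in> U \<and> \<beta> y v \<in> U) \<and>
        (\<forall>u\<in>U. \<forall>v\<in>U. \<forall>y\<in>P u. \<forall>z\<in>P v. m y z = m (\<alpha> y v) (\<beta> z u)) \<and>
        (\<forall>u\<in>U. \<forall>v\<in>U. \<alpha> u v = u \<and> \<beta> u v = u))"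

end

theory Submission
  imports Defs
begin

text \<open>A multiplication on \<open>G \<union> {x}\<close> that extends \<open>G\<close> and is a generalised inflation
  with the blocks \<open>{c, x}\<close> and \<open>{a}\<close> is forced to be \<open>xa = \<alpha>(a)a\<close>, \<open>ax = a\<beta>(a)\<close>,
  \<open>xx = \<alpha>(c)\<beta>(c)\<close>, where \<open>\<alpha>\<close>, \<open>\<beta>\<close> are the inflation maps of \<open>x\<close>; conversely this
  multiplication (\<open>adjoin_mult\<close>) is always such an inflation.  So everything reduces to
  deciding when \<open>adjoin_mult\<close> is right modular, and checking \<open>pq\<cdot>r = rq\<cdot>p\<close> for each
  placement of \<open>x\<close> among \<open>p, q, r\<close> yields exactly (1)--(3).\<close>

definition adjoin_mult ::
  "('a \<Rightarrow> 'a \<Rightarrow> 'a) \<Rightarrow> 'a \<Rightarrow> ('a \<Rightarrow> 'a) \<Rightarrow> ('a \<Rightarrow> 'a) \<Rightarrow> 'a \<Rightarrow> 'a \<Rightarrow> 'a \<Rightarrow> 'a" where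
  "adjoin_mult mul x \<alpha> \<beta> c p q =
     (if p = x then if q = x then mul (\<alpha> c) (\<beta> c) else mul (\<alpha> q) q
      else if q = x then mul p (\<beta> p) else mul p q)"

lemma adjoin_mult_simps [simp]:
  "adjoin_mult mul x \<alpha> \<beta> c x x = mul (\<alpha> c) (\<beta> c)"
  "a \<noteq> x \<Longrightarrow> adjoin_mult mul x \<alpha> \<beta> c x a = mul (\<alpha> a) a"
  "a \<noteq> x \<Longrightarrow> adjoin_mult mul x \<alpha> \<beta> c a x = mul a (\<beta> a)"
  "a \<noteq> x \<Longrightarrow> b \<noteq> x \<Longrightarrow> adjoin_mult mul x \<alpha> \<beta> c a b = mul a b"
  by (simp_all add: adjoin_mult_def)

lemma groupoid_adjoin_mult:
  assumes "groupoid G mul" and "c \<in> G" and "\<forall>a\<in>G. \<alpha> a \<in> G \<and> \<beta> a \<in> G"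
  shows "groupoid (insert x G) (adjoin_mult mul x \<alpha> \<beta> c)"
  using assms unfolding groupoid_def adjoin_mult_def by auto

lemma right_modular_cong:
  assumes "groupoid S m" and "\<forall>p\<in>S. \<forall>q\<in>S. m p q = m' p q"
  shows "right_modular S m \<longleftrightarrow> right_modular S m'"
  using assms unfolding right_modular_def groupoid_def by simp

lemma right_modular_adjoin_mult_iff:
  assumes G: "groupoid G mul" and rm: "right_modular G mul" and "x \<notin> G" and "c \<in> G"
    and \<alpha>\<beta>: "\<forall>a\<in>G. \<alpha> a \<in> G \<and> \<beta> a \<in> G"
  shows "right_modular (insert x G) (adjoin_mult mul x \<alpha> \<beta> c) \<longleftrightarrow>
     (\<forall>a\<in>G. \<forall>b\<in>G.
        mul (mul (\<alpha> a) a) b = mul (mul b a) (\<beta> (mul b a)) \<and>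
        mul (mul a (\<beta> a)) b = mul (mul b (\<beta> b)) a \<and>
        mul (mul (\<alpha> c) (\<beta> c)) a = mul (mul a (\<beta> a)) (\<beta> (mul a (\<beta> a))))"
  (is "right_modular _ ?m \<longleftrightarrow> ?conds")
proof -
  have neq: "a \<noteq> x" if "a \<in> G" for a using that \<open>x \<notin> G\<close> by blast
  have cl: "mul a b \<in> G" if "a \<in> G" "b \<in> G" for a b
    using G that by (simp add: groupoid_def)
  have \<alpha>G: "\<alpha> a \<in> G" and \<beta>G: "\<beta> a \<in> G" if "a \<in> G" for a
    using \<alpha>\<beta> that by simp_all
  show ?thesis
  proof
    assume rmx: "right_modular (insert x G) ?m"
    show ?conds
    proof (intro ballI conjI)
      fix a b assume a: "a \<in> G" and b: "b \<in> G"
      have "?m (?m x a) b = ?m (?m b a) x" "?m (?m a x) b = ?m (?m b x) a"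
        "?m (?m x x) a = ?m (?m a x) x"
        using rmx a b unfolding right_modular_def by blast+
      then show "mul (mul (\<alpha> a) a) b = mul (mul b a) (\<beta> (mul b a))"
        "mul (mul a (\<beta> a)) b = mul (mul b (\<beta> b)) a"
        "mul (mul (\<alpha> c) (\<beta> c)) a = mul (mul a (\<beta> a)) (\<beta> (mul a (\<beta> a)))"
        using a b \<open>c \<in> G\<close> by (simp_all add: neq cl \<alpha>G \<beta>G)
    qed
  next
    assume ?conds
    \<comment> \<open>\<open>x a b\<close> and \<open>b a x\<close> are (1), \<open>a x b\<close> is (2), \<open>x x a\<close> and \<open>a x x\<close> are (3)\<close>
    show "right_modular (insert x G) ?m"
      using rm \<open>?conds\<close> \<open>c \<in> G\<close>
      by (auto simp: right_modular_def neq cl \<alpha>G \<beta>G)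
  qed
qed

lemma gen_inflation_adjoin_point_mult:
  assumes gi: "gen_inflation (insert x G) m G (\<lambda>a. if a = c then {c, x} else {a})"
    and "x \<notin> G" and c: "c \<in> G" and mG: "\<forall>a\<in>G. \<forall>b\<in>G. m a b = mul a b"
  obtains \<alpha> \<beta> where "\<forall>a\<in>G. \<alpha> a \<in> G \<and> \<beta> a \<in> G"
    and "\<forall>p\<in>insert x G. \<forall>q\<in>insert x G. m p q = adjoin_mult mul x \<alpha> \<beta> c p q"
proof -
  define P where "P = (\<lambda>a. if a = c then {c, x} else {a})"
  have "\<exists>\<alpha>' \<beta>'. (\<forall>y\<in>insert x G. \<forall>v\<in>G. \<alpha>' y v \<in> G \<and> \<beta>' y v \<in> G) \<and>
      (\<forall>u\<in>G. \<forall>v\<in>G. \<forall>y\<in>P u. \<forall>z\<in>P v. m y z = m (\<alpha>' y v) (\<beta>' z u)) \<and>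
      (\<forall>u\<in>G. \<forall>v\<in>G. \<alpha>' u v = u \<and> \<beta>' u v = u)"
    using gi unfolding gen_inflation_def P_def by (elim conjE) assumption
  then obtain \<alpha>' \<beta>' where \<alpha>'\<beta>'G: "\<forall>y\<in>insert x G. \<forall>v\<in>G. \<alpha>' y v \<in> G \<and> \<beta>' y v \<in> G"
    and blocks: "\<forall>u\<in>G. \<forall>v\<in>G. \<forall>y\<in>P u. \<forall>z\<in>P v. m y z = m (\<alpha>' y v) (\<beta>' z u)"
    and const: "\<forall>u\<in>G. \<forall>v\<in>G. \<alpha>' u v = u \<and> \<beta>' u v = u"
    by blast
  have xP: "x \<in> P c" and aP: "\<And>a. a \<in> P a" by (auto simp: P_def)
  have neq: "a \<noteq> x" if "a \<in> G" for a using that \<open>x \<notin> G\<close> by blast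
  have xx: "m x x = mul (\<alpha>' x c) (\<beta>' x c)"
    using blocks[rule_format, OF c c xP xP] \<alpha>'\<beta>'G mG c by simp
  have xa: "m x a = mul (\<alpha>' x a) a" and ax: "m a x = mul a (\<beta>' x a)" if "a \<in> G" for a
    using blocks[rule_format, OF c that xP aP] blocks[rule_format, OF that c aP xP]
      \<alpha>'\<beta>'G const mG c that
    by simp_all
  have agree: "m p q = adjoin_mult mul x (\<alpha>' x) (\<beta>' x) c p q"
    if "p \<in> insert x G" "q \<in> insert x G" for p q
  proof -
    have "p = x \<or> p \<in> G" "q = x \<or> q \<in> G" using that by auto
    then show ?thesis using xx xa ax mG neq by (elim disjE) simp_all
  qed
  show thesis
    by (rule that[of "\<alpha>' x" "\<beta>' x"]) (use \<alpha>'\<beta>'G agree in auto)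
qed

lemma gen_inflation_adjoin_mult:
  assumes G: "groupoid G mul" and "x \<notin> G" and c: "c \<in> G"
    and \<alpha>\<beta>: "\<forall>a\<in>G. \<alpha> a \<in> G \<and> \<beta> a \<in> G"
  shows "gen_inflation (insert x G) (adjoin_mult mul x \<alpha> \<beta> c) G
           (\<lambda>a. if a = c then {c, x} else {a})"
    (is "gen_inflation _ ?m _ ?P")
proof -
  have neq: "a \<noteq> x" if "a \<in> G" for a using that \<open>x \<notin> G\<close> by blast
  define \<alpha>' where "\<alpha>' y v = (if y = x then \<alpha> v else y)" for y v
  define \<beta>' where "\<beta>' z u = (if z = x then \<beta> u else z)" for z u
  have blocks: "?m y z = ?m (\<alpha>' y v) (\<beta>' z u)"
    if "u \<in> G" "v \<in> G" "y \<in> ?P u" "z \<in> ?P v" for u v y z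
  proof -
    have "y = x \<and> u = c \<or> y = u" "z = x \<and> v = c \<or> z = v"
      using that by (auto split: if_splits)
    then show ?thesis using that(1,2) \<alpha>\<beta> by (elim disjE) (auto simp: \<alpha>'_def \<beta>'_def neq)
  qed
  show ?thesis
    unfolding gen_inflation_def
  proof (intro conjI)
    show "groupoid G ?m" using G by (simp add: groupoid_def neq)
    show "insert x G = (\<Union>u\<in>G. ?P u)" using c by auto
    show "\<forall>u\<in>G. \<forall>v\<in>G. u \<noteq> v \<longrightarrow> ?P u \<inter> ?P v = {}" using neq by auto
    have "(\<forall>y\<in>insert x G. \<forall>v\<in>G. \<alpha>' y v \<in> G \<and> \<beta>' y v \<in> G) \<and>
        (\<forall>u\<in>G. \<forall>v\<in>G. \<forall>y\<in>?P u. \<forall>z\<in>?P v. ?m y z = ?m (\<alpha>' y v) (\<beta>' z u)) \<and>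
        (\<forall>u\<in>G. \<forall>v\<in>G. \<alpha>' u v = u \<and> \<beta>' u v = u)"
      using \<alpha>\<beta> blocks by (simp add: \<alpha>'_def \<beta>'_def neq)
    then show "\<exists>\<alpha>' \<beta>'. (\<forall>y\<in>insert x G. \<forall>v\<in>G. \<alpha>' y v \<in> G \<and> \<beta>' y v \<in> G) \<and>
        (\<forall>u\<in>G. \<forall>v\<in>G. \<forall>y\<in>?P u. \<forall>z\<in>?P v. ?m y z = ?m (\<alpha>' y v) (\<beta>' z u)) \<and>
        (\<forall>u\<in>G. \<forall>v\<in>G. \<alpha>' u v = u \<and> \<beta>' u v = u)"
      by blast
  qed auto
qed

theorem theorem4:
  fixes G :: "'a set" and mul :: "'a \<Rightarrow> 'a \<Rightarrow> 'a" and x :: 'a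
  assumes "groupoid G mul" and "right_modular G mul" and "x \<notin> G"
  shows "(\<exists>m' c. c \<in> G \<and> groupoid (insert x G) m'
            \<and> (\<forall>a\<in>G. \<forall>b\<in>G. m' a b = mul a b)
            \<and> right_modular (insert x G) m'
            \<and> gen_inflation (insert x G) m' G (\<lambda>a. if a = c then {c, x} else {a}))
     \<longleftrightarrow>
     (\<exists>\<alpha> \<beta> :: 'a \<Rightarrow> 'a. \<exists>c. c \<in> G \<and> (\<forall>a\<in>G. \<alpha> a \<in> G \<and> \<beta> a \<in> G) \<and>
        (\<forall>a\<in>G. \<forall>b\<in>G.
           mul (mul (\<alpha> a) a) b = mul (mul b a) (\<beta> (mul b a)) \<and>
           mul (mul a (\<beta> a)) b = mul (mul b (\<beta> b)) a \<and>
           mul (mul (\<alpha> c) (\<beta> c)) a = mul (mul a (\<beta> a)) (\<beta> (mul a (\<beta> a)))))"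
  (is "?inflation \<longleftrightarrow> ?conditions")
proof
  assume ?inflation
  then obtain m c where c: "c \<in> G" and m: "groupoid (insert x G) m"
    and mG: "\<forall>a\<in>G. \<forall>b\<in>G. m a b = mul a b" and rm: "right_modular (insert x G) m"
    and gi: "gen_inflation (insert x G) m G (\<lambda>a. if a = c then {c, x} else {a})"
    by blast
  obtain \<alpha> \<beta> where \<alpha>\<beta>: "\<forall>a\<in>G. \<alpha> a \<in> G \<and> \<beta> a \<in> G"
    and agree: "\<forall>p\<in>insert x G. \<forall>q\<in>insert x G. m p q = adjoin_mult mul x \<alpha> \<beta> c p q"
    using gen_inflation_adjoin_point_mult[OF gi assms(3) c mG] .
  have "right_modular (insert x G) (adjoin_mult mul x \<alpha> \<beta> c)"
    using rm right_modular_cong[OF m agree] by simp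
  then show ?conditions
    using right_modular_adjoin_mult_iff[OF assms c \<alpha>\<beta>] c \<alpha>\<beta> by blast
next
  assume ?conditions
  then obtain \<alpha> \<beta> c where c: "c \<in> G" and \<alpha>\<beta>: "\<forall>a\<in>G. \<alpha> a \<in> G \<and> \<beta> a \<in> G"
    and conds: "\<forall>a\<in>G. \<forall>b\<in>G.
           mul (mul (\<alpha> a) a) b = mul (mul b a) (\<beta> (mul b a)) \<and>
           mul (mul a (\<beta> a)) b = mul (mul b (\<beta> b)) a \<and>
           mul (mul (\<alpha> c) (\<beta> c)) a = mul (mul a (\<beta> a)) (\<beta> (mul a (\<beta> a)))"
    by blast
  have "a \<noteq> x" if "a \<in> G" for a using that assms(3) by blast
  then have "\<forall>a\<in>G. \<forall>b\<in>G. adjoin_mult mul x \<alpha> \<beta> c a b = mul a b" by simp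
  with c show ?inflation
    using groupoid_adjoin_mult[OF assms(1) c \<alpha>\<beta>] gen_inflation_adjoin_mult[OF assms(1,3) c \<alpha>\<beta>]
      right_modular_adjoin_mult_iff[OF assms c \<alpha>\<beta>] conds
    by blast
qed

end
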